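(* For every $n\ge 0$, the numbers of classes of each type satisfy \begin{align*} |\overline{t}_n^{\mathcal{S}_2}| &= |t_n^{\mathcal{S}_2}| - \sum_{m=0}^{n-1}\alpha_{n,m}|\overline{t}_m^{\mathcal{S}_2}|,\\ |\overline{t}_n^{\langle r\rangle}| &= |t_n^{\langle r\rangle}| - \sum_{m=0}^{n-1}\alpha_{n,m}|\overline{t}_m^{\langle r\rangle}|,\\ |\overline{t}_n^{\langle rc\rangle}| &= |t_n^{\langle rc\rangle}| - \sum_{m=0}^{n-1}\alpha_{n,m}|\overline{t}_m^{\langle rc\rangle}|,\\ |\overline{t}_n^{\langle c\rangle}| &= |t_n^{\langle c\rangle}| - \sum_{m=0}^{n-1}\Big[\binom{n}{m}|\overline{t}_m^{\langle c\rangle}| + \tfrac12\beta_{n,m}|\overline{t}_m^{\mathcal{S}_2}|\Big],\\ |\overline{t}_n^{\langle 1\rangle}| &= |t_n^{\langle 1\rangle}| - \sum_{m=0}^{n-1}\Big[\binom{n}{m}|\overline{t}_m^{\langle 1\rangle}| + \tfrac12\beta_{n,m}\big(|\overline{t}_m^{\langle r\rangle}|+|\overline{t}_m^{\langle rc\rangle}|\big)\Big]. \end{align*}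
   Context: Binary setting: $\mathcal{A}=\{0,1\}$, $L_2(n)$ is the set of all $f:\{0,1\}^n\to\{0,1\}$ and $\overline{L}_2(n)\subseteq L_2(n)$ the irreducible ones (those depending on every argument: for each index $j$ some change of only the $j$-th input letter changes the output). Let $c$ be the transposition $0\leftrightarrow1$ applied letterwise to words, and $r$ the reversal of words, $r(a_1\dots a_n)=a_n\dots a_1$. Operators on rules: $\hat{c}f(w)=c\,f(c\,w)$, $\hat{r}f(w)=f(rw)$, $\widehat{rc}=\hat r\hat c$. The group $\mathcal{S}_2=\{1,r,c,rc\}$ (Klein four-group) acts on $L_2(n)$ and on $\overline{L}_2(n)$ in this way; $[f]$ denotes the orbit of $f$ and $\mathrm{stab}(f)=\{\alpha\in\mathcal{S}_2\mid\hat\alpha f=f\}$ (constant on orbits since the group is abelian). For a subgroup $U\le\mathcal{S}_2$ (i.e. $\langle 1\rangle,\langle r\rangle,\langle c\rangle,\langle rc\rangle,\mathcal{S}_2$), put $t_n^U=\{[f]\in L_2(n)/\mathcal{S}_2\mid \mathrm{stab}(f)=U\}$ and $\overline{t}_n^U=\{[f]\in\overline{L}_2(n)/\mathcal{S}_2\mid\mathrm{stab}(f)=U\}$. For $n\ge m\ge0$: $\alpha_{n,m}=0$ if $n$ is even and $m$ is odd, and $\alpha_{n,m}=\binom{\lfloor n/2\rfloor}{\lfloor m/2\rfloor}$ otherwise; $\beta_{n,m}=\binom{n}{m}-\alpha_{n,m}$. *)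

theory Defs
  imports Complex_Main
begin

text \<open>Words of length n over {0,1} are bool lists of length n (False = 0, True = 1).
  A rule f : {0,1}^n -> {0,1} is represented extensionally as a function
  bool list => bool that is False outside words of length n.\<close>

definition L2 :: "nat \<Rightarrow> (bool list \<Rightarrow> bool) set" where
  "L2 n = {f. \<forall>w. length w \<noteq> n \<longrightarrow> f w = False}"

definition irreducible_rule :: "nat \<Rightarrow> (bool list \<Rightarrow> bool) \<Rightarrow> bool" where
  "irreducible_rule n f \<longleftrightarrow>
     (\<forall>j<n. \<exists>w. length w = n \<and> f (w[j := \<not> w ! j]) \<noteq> f w)"

definition L2bar :: "nat \<Rightarrow> (bool list \<Rightarrow> bool) set" where
  "L2bar n = {f \<in> L2 n. irreducible_rule n f}"

definition cw :: "bool list \<Rightarrow> bool list" where "cw w = map Not w"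
definition rw :: "bool list \<Rightarrow> bool list" where "rw w = rev w"

datatype S2 = S2_1 | S2_r | S2_c | S2_rc

definition hat_c :: "nat \<Rightarrow> (bool list \<Rightarrow> bool) \<Rightarrow> (bool list \<Rightarrow> bool)" where
  "hat_c n f = (\<lambda>w. if length w = n then \<not> f (cw w) else False)"
definition hat_r :: "nat \<Rightarrow> (bool list \<Rightarrow> bool) \<Rightarrow> (bool list \<Rightarrow> bool)" where
  "hat_r n f = (\<lambda>w. if length w = n then f (rw w) else False)"

fun act :: "nat \<Rightarrow> S2 \<Rightarrow> (bool list \<Rightarrow> bool) \<Rightarrow> (bool list \<Rightarrow> bool)" where
  "act n S2_1 f = f"
| "act n S2_r f = hat_r n f"
| "act n S2_c f = hat_c n f"
| "act n S2_rc f = hat_r n (hat_c n f)"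

definition orbit :: "nat \<Rightarrow> (bool list \<Rightarrow> bool) \<Rightarrow> (bool list \<Rightarrow> bool) set" where
  "orbit n f = {act n a f | a. True}"

definition stab :: "nat \<Rightarrow> (bool list \<Rightarrow> bool) \<Rightarrow> S2 set" where
  "stab n f = {a. act n a f = f}"

definition U_1 :: "S2 set" where "U_1 = {S2_1}"
definition U_r :: "S2 set" where "U_r = {S2_1, S2_r}"
definition U_c :: "S2 set" where "U_c = {S2_1, S2_c}"
definition U_rc :: "S2 set" where "U_rc = {S2_1, S2_rc}"
definition U_S2 :: "S2 set" where "U_S2 = UNIV"

definition t_cls :: "nat \<Rightarrow> S2 set \<Rightarrow> (bool list \<Rightarrow> bool) set set" where
  "t_cls n U = {orbit n f | f. f \<in> L2 n \<and> stab n f = U}"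
definition tbar_cls :: "nat \<Rightarrow> S2 set \<Rightarrow> (bool list \<Rightarrow> bool) set set" where
  "tbar_cls n U = {orbit n f | f. f \<in> L2bar n \<and> stab n f = U}"

definition alpha :: "nat \<Rightarrow> nat \<Rightarrow> nat" where
  "alpha n m = (if even n \<and> odd m then 0 else (n div 2) choose (m div 2))"
definition beta :: "nat \<Rightarrow> nat \<Rightarrow> int" where
  "beta n m = int (n choose m) - int (alpha n m)"

end

theory Submission
  imports Defs
begin

text \<open>
  A rule f of arity n factors uniquely as f = lift_rule n S g, where S is the set of positions f
  depends on and g is an irreducible rule of arity |S|. Complementation acts on g alone, while
  reversal acts on g and mirrors S; so the stabiliser of f is that of g intersected with the whole
  group when S is mirror-symmetric, and with {1, c} otherwise. Among the m-subsets of
  {0, ..., n - 1}, alpha n m are mirror-symmetric (such a set is determined by its lower half and,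
  when n is odd, by whether it contains the middle position) and beta n m are not. Counting the
  rules with a given stabiliser U thus gives a sum over m of alpha n m times the irreducible rules
  with stabiliser U plus beta n m times those whose stabiliser meets {1, c} in U. The relation
  |orbit| * |stab| = 4 turns rule counts into class counts, and separating the term m = n, where
  alpha n n = 1 and beta n n = 0, gives the five recursions.
\<close>

lemma card_eq_sum_card_fibres:
  "finite A \<Longrightarrow> finite B \<Longrightarrow> g ` A \<subseteq> B \<Longrightarrow> card A = (\<Sum>y\<in>B. card {x \<in> A. g x = y})"
  unfolding card_eq_sum by (rule sum.group[symmetric])

lemma card_Collect_bij_betw:
  assumes "bij_betw h A B"
  shows "card {y \<in> B. P y} = card {x \<in> A. P (h x)}"
proof -
  have "h ` A = B"
    using assms by (simp add: bij_betw_def)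
  then have "bij_betw h {x \<in> A. P (h x)} {y \<in> B. P y}"
    by (intro bij_betw_subset[OF assms]) auto
  then show ?thesis
    by (simp add: bij_betw_same_card)
qed

fun s2_mult :: "S2 \<Rightarrow> S2 \<Rightarrow> S2" where
  "s2_mult S2_1 b = b"
| "s2_mult a S2_1 = a"
| "s2_mult S2_r S2_r = S2_1"
| "s2_mult S2_r S2_c = S2_rc"
| "s2_mult S2_r S2_rc = S2_c"
| "s2_mult S2_c S2_r = S2_rc"
| "s2_mult S2_c S2_c = S2_1"
| "s2_mult S2_c S2_rc = S2_r"
| "s2_mult S2_rc S2_r = S2_c"
| "s2_mult S2_rc S2_c = S2_r"
| "s2_mult S2_rc S2_rc = S2_1"

lemma s2_mult_self_cancel [simp]: "s2_mult a (s2_mult a b) = b"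
  by (cases a; cases b) simp_all

lemma s2_mult_commute: "s2_mult a b = s2_mult b a"
  by (cases a; cases b) simp_all

lemma bij_s2_mult: "bij (s2_mult a)"
  by (metis bijI' s2_mult_self_cancel)

lemma hat_c_in_L2: "hat_c n f \<in> L2 n"
  by (simp add: L2_def hat_c_def)

lemma hat_r_in_L2: "hat_r n f \<in> L2 n"
  by (simp add: L2_def hat_r_def)

lemma act_in_L2: "f \<in> L2 n \<Longrightarrow> act n a f \<in> L2 n"
  by (cases a) (simp_all add: hat_c_in_L2 hat_r_in_L2)

lemma hat_c_hat_c: "f \<in> L2 n \<Longrightarrow> hat_c n (hat_c n f) = f"
  by (rule ext) (auto simp: L2_def hat_c_def cw_def comp_def)

lemma hat_r_hat_r: "f \<in> L2 n \<Longrightarrow> hat_r n (hat_r n f) = f"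
  by (rule ext) (auto simp: L2_def hat_r_def rw_def)

lemma hat_r_hat_c_commute: "hat_r n (hat_c n f) = hat_c n (hat_r n f)"
  by (rule ext) (simp add: hat_c_def hat_r_def rw_def cw_def rev_map)

lemma act_s2_mult: "f \<in> L2 n \<Longrightarrow> act n (s2_mult a b) f = act n a (act n b f)"
  by (cases a; cases b)
    (simp_all add: hat_c_hat_c hat_r_hat_r hat_r_hat_c_commute hat_c_in_L2 hat_r_in_L2)

lemma act_act_self: "f \<in> L2 n \<Longrightarrow> act n a (act n a f) = f"
  using act_s2_mult[of f n a a] by (cases a) simp_all

lemma act_commute: "f \<in> L2 n \<Longrightarrow> act n a (act n b f) = act n b (act n a f)"
  by (metis act_s2_mult s2_mult_commute)

lemma act_inject: "f \<in> L2 n \<Longrightarrow> g \<in> L2 n \<Longrightarrow> act n a f = act n a g \<longleftrightarrow> f = g"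
  by (metis act_act_self)

lemma stab_act:
  assumes f: "f \<in> L2 n"
  shows "stab n (act n a f) = stab n f"
proof -
  have "act n b (act n a f) = act n a f \<longleftrightarrow> act n a (act n b f) = act n a f" for b
    by (simp add: act_commute[OF f])
  then show ?thesis
    by (simp add: stab_def act_inject act_in_L2 f)
qed

lemmas U_defs = U_1_def U_r_def U_c_def U_rc_def U_S2_def

lemma UNIV_S2: "(UNIV :: S2 set) = {S2_1, S2_r, S2_c, S2_rc}"
  using S2.exhaust by blast

lemma card_U: "card U_1 = 1" "card U_r = 2" "card U_c = 2" "card U_rc = 2" "card U_S2 = 4"
  by (simp_all add: U_defs UNIV_S2)

lemma U_distinct:
  "U_1 \<noteq> U_r" "U_1 \<noteq> U_c" "U_1 \<noteq> U_rc" "U_1 \<noteq> U_S2" "U_r \<noteq> U_c"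
  "U_r \<noteq> U_rc" "U_r \<noteq> U_S2" "U_c \<noteq> U_rc" "U_c \<noteq> U_S2" "U_rc \<noteq> U_S2"
  by (simp_all add: U_defs UNIV_S2 insert_eq_iff)

lemma U_inter_U_c:
  "U_1 \<inter> U_c = U_1" "U_r \<inter> U_c = U_1" "U_c \<inter> U_c = U_c" "U_rc \<inter> U_c = U_1" "U_S2 \<inter> U_c = U_c"
  by (auto simp: U_defs)

lemma S2_subgroup_cases:
  assumes "S2_1 \<in> H" and "\<And>a b. a \<in> H \<Longrightarrow> b \<in> H \<Longrightarrow> s2_mult a b \<in> H"
  shows "H = U_1 \<or> H = U_r \<or> H = U_c \<or> H = U_rc \<or> H = U_S2"
proof -
  have "H = {S2_1} \<union> {a. a = S2_r \<and> S2_r \<in> H} \<union> {a. a = S2_c \<and> S2_c \<in> H}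
      \<union> {a. a = S2_rc \<and> S2_rc \<in> H}"
    using assms(1) by (auto intro: S2.exhaust)
  moreover have "S2_r \<in> H \<Longrightarrow> S2_c \<in> H \<Longrightarrow> S2_rc \<in> H" "S2_c \<in> H \<Longrightarrow> S2_rc \<in> H \<Longrightarrow> S2_r \<in> H"
    "S2_r \<in> H \<Longrightarrow> S2_rc \<in> H \<Longrightarrow> S2_c \<in> H"
    using assms(2)[of S2_r S2_c] assms(2)[of S2_c S2_rc] assms(2)[of S2_r S2_rc] by simp_all
  ultimately show ?thesis
    unfolding U_defs UNIV_S2
    by (cases "S2_r \<in> H"; cases "S2_c \<in> H"; cases "S2_rc \<in> H") auto
qed

lemma stab_cases:
  "f \<in> L2 n \<Longrightarrow> stab n f = U_1 \<or> stab n f = U_r \<or> stab n f = U_c \<or> stab n f = U_rc \<or> stab n f = U_S2"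
  by (rule S2_subgroup_cases) (simp_all add: stab_def act_s2_mult)

lemma orbit_eq_range: "orbit n f = range (\<lambda>a. act n a f)"
  by (auto simp: orbit_def)

lemma finite_orbit: "finite (orbit n f)"
  by (simp add: orbit_eq_range UNIV_S2)

lemma mem_orbit_self: "f \<in> orbit n f"
  using rangeI[of "\<lambda>a. act n a f" S2_1] by (simp add: orbit_eq_range)

lemma card_orbit_mult_card_stab:
  assumes f: "f \<in> L2 n"
  shows "card (orbit n f) * card (stab n f) = 4"
proof -
  have fibre: "{b. act n b f = act n a f} = s2_mult a -` stab n f" for a
  proof -
    have "act n b f = act n a f \<longleftrightarrow> act n a (act n b f) = f" for b
      using act_inject[of "act n b f" n "act n a f" a] by (simp add: act_act_self act_in_L2 f)
    then show ?thesis
      by (simp add: stab_def act_s2_mult[OF f])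
  qed
  have "4 = card (UNIV :: S2 set)"
    by (simp add: UNIV_S2)
  also have "\<dots> = (\<Sum>g\<in>orbit n f. card {b. act n b f = g})"
    by (rule card_eq_sum_card_fibres[where A = UNIV, simplified])
      (auto simp: UNIV_S2 finite_orbit orbit_eq_range)
  also have "\<dots> = (\<Sum>g\<in>orbit n f. card (stab n f))"
  proof (rule sum.cong)
    fix g assume "g \<in> orbit n f"
    then obtain a where "g = act n a f"
      by (auto simp: orbit_def)
    then show "card {b. act n b f = g} = card (stab n f)"
      using bij_s2_mult[of a] by (simp add: fibre card_vimage_inj bij_is_inj bij_is_surj)
  qed simp
  finally show ?thesis
    by simp
qed

lemma orbit_act:
  assumes f: "f \<in> L2 n"
  shows "orbit n (act n a f) = orbit n f"
proof -
  have "orbit n (act n a f) = range (\<lambda>b. act n (s2_mult b a) f)"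
    by (simp add: orbit_eq_range act_s2_mult[OF f])
  also have "\<dots> = (\<lambda>b. act n b f) ` range (\<lambda>b. s2_mult a b)"
    by (auto simp: s2_mult_commute)
  also have "\<dots> = orbit n f"
    using bij_s2_mult[of a] by (simp add: orbit_eq_range bij_is_surj)
  finally show ?thesis .
qed

lemma orbit_eq_iff:
  assumes f: "f \<in> L2 n"
  shows "orbit n g = orbit n f \<longleftrightarrow> g \<in> orbit n f"
proof
  show "orbit n g = orbit n f \<Longrightarrow> g \<in> orbit n f"
    using mem_orbit_self[of g n] by simp
next
  assume "g \<in> orbit n f"
  then obtain a where "g = act n a f"
    by (auto simp: orbit_def)
  then show "orbit n g = orbit n f"
    by (simp add: orbit_act[OF f])
qed

lemma card_orbits_with_stab:
  assumes X: "finite X" "X \<subseteq> L2 n" and closed: "\<And>f a. f \<in> X \<Longrightarrow> act n a f \<in> X"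
  shows "card {orbit n f | f. f \<in> X \<and> stab n f = U} * 4 = card {f \<in> X. stab n f = U} * card U"
proof -
  define F where "F = {f \<in> X. stab n f = U}"
  define C where "C = orbit n ` F"
  have orbit_subset: "orbit n f \<subseteq> F" if "f \<in> F" for f
    using that X(2) closed stab_act by (auto simp: F_def orbit_def)
  have fibre: "{g \<in> F. orbit n g = orbit n f} = orbit n f" if "f \<in> F" for f
  proof -
    have "f \<in> L2 n"
      using that X(2) by (auto simp: F_def)
    then show ?thesis
      using orbit_subset[OF that] by (auto simp: orbit_eq_iff)
  qed
  have "card F * card U = (\<Sum>c\<in>C. card {g \<in> F. orbit n g = c}) * card U"
    using X(1) by (subst card_eq_sum_card_fibres[of F C "orbit n"]) (simp_all add: F_def C_def)
  also have "\<dots> = (\<Sum>c\<in>C. 4)"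
    unfolding sum_distrib_right
    using fibre card_orbit_mult_card_stab X(2) by (intro sum.cong) (auto simp: C_def F_def)
  also have "\<dots> = card C * 4"
    by simp
  finally show ?thesis
    by (simp add: F_def C_def setcompr_eq_image)
qed

lemma finite_L2: "finite (L2 n)"
proof -
  have "f \<in> (\<lambda>W w. w \<in> W) ` Pow {w. length w = n}" if "f \<in> L2 n" for f
    using that by (auto simp: L2_def image_iff intro!: bexI[of _ "Collect f"])
  then have "L2 n \<subseteq> (\<lambda>W w. w \<in> W) ` Pow {w. length w = n}"
    by blast
  then show ?thesis
    by (rule finite_subset) (use finite_lists_length_eq[of "UNIV :: bool set" n] in simp)
qed

lemma finite_L2bar: "finite (L2bar n)"
  using finite_L2 by (rule finite_subset[rotated]) (auto simp: L2bar_def)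

lemma L2bar_subset_L2: "L2bar n \<subseteq> L2 n"
  by (auto simp: L2bar_def)

definition flip :: "bool list \<Rightarrow> nat \<Rightarrow> bool list" where
  "flip w j = w[j := \<not> w ! j]"

definition essential_vars :: "nat \<Rightarrow> (bool list \<Rightarrow> bool) \<Rightarrow> nat set" where
  "essential_vars n f = {j. j < n \<and> (\<exists>w. length w = n \<and> f (flip w j) \<noteq> f w)}"

lemma length_flip [simp]: "length (flip w j) = length w"
  by (simp add: flip_def)

lemma map_Not_flip: "map Not (flip w j) = flip (map Not w) j"
  by (cases "j < length w") (simp_all add: flip_def map_update list_update_beyond)

lemma rev_flip: "j < length w \<Longrightarrow> rev (flip w j) = flip (rev w) (length w - 1 - j)"
  by (rule nth_equalityI) (auto simp: flip_def rev_nth nth_list_update)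

lemma essential_vars_subset: "essential_vars n f \<subseteq> {..<n}"
  by (auto simp: essential_vars_def)

lemma irreducible_rule_iff_essential_vars: "irreducible_rule n f \<longleftrightarrow> essential_vars n f = {..<n}"
  unfolding irreducible_rule_def essential_vars_def flip_def by auto

lemma rule_eq_if_agree_on_essential_vars:
  assumes f: "f \<in> L2 n" and lw: "length w = n" and lw': "length w' = n"
    and agree: "\<forall>j\<in>essential_vars n f. w ! j = w' ! j"
  shows "f w = f w'"
proof -
  define u where "u k = map (\<lambda>i. if i < k then w' ! i else w ! i) [0..<n]" for k
  have length_u: "length (u k) = n" for k
    by (simp add: u_def)
  have step: "f (u (Suc k)) = f (u k)" if k: "k < n" for k
  proof (cases "w' ! k = w ! k")
    case True
    have "u (Suc k) = u k"
      by (rule nth_equalityI) (auto simp: u_def length_u True less_Suc_eq)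
    then show ?thesis
      by simp
  next
    case False
    then have "k \<notin> essential_vars n f"
      using agree by auto
    then have "f (flip (u k) k) = f (u k)"
      using k length_u by (auto simp: essential_vars_def)
    moreover have "u (Suc k) = flip (u k) k"
      using False by (intro nth_equalityI) (auto simp: u_def length_u flip_def nth_list_update k less_Suc_eq)
    ultimately show ?thesis
      by simp
  qed
  have "f (u k) = f w" if "k \<le> n" for k
    using that
  proof (induction k)
    case 0
    have "u 0 = w"
      by (rule nth_equalityI) (auto simp: u_def lw)
    then show ?case
      by simp
  next
    case (Suc k)
    then show ?case
      using step by simp
  qed
  moreover have "u n = w'"
    by (rule nth_equalityI) (auto simp: u_def lw')
  ultimately show ?thesis
    by (metis order_refl)
qed

lemma essential_vars_hat_c: "essential_vars n (hat_c n f) = essential_vars n f"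
proof -
  have "(\<exists>w. length w = n \<and> hat_c n f (flip w j) \<noteq> hat_c n f w) \<longleftrightarrow>
      (\<exists>w. length w = n \<and> f (flip w j) \<noteq> f w)" for j
  proof
    assume "\<exists>w. length w = n \<and> hat_c n f (flip w j) \<noteq> hat_c n f w"
    then show "\<exists>w. length w = n \<and> f (flip w j) \<noteq> f w"
      by (auto simp: hat_c_def cw_def map_Not_flip intro: exI[of _ "map Not _"])
  next
    assume "\<exists>w. length w = n \<and> f (flip w j) \<noteq> f w"
    then obtain w where "length w = n" "f (flip w j) \<noteq> f w"
      by blast
    then show "\<exists>w. length w = n \<and> hat_c n f (flip w j) \<noteq> hat_c n f w"
      by (intro exI[of _ "map Not w"]) (simp add: hat_c_def cw_def map_Not_flip comp_def)
  qed
  then show ?thesis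
    by (simp add: essential_vars_def)
qed

definition mirror :: "nat \<Rightarrow> nat set \<Rightarrow> nat set" where
  "mirror n S = {i. i < n \<and> n - 1 - i \<in> S}"

lemma mirror_subset: "mirror n S \<subseteq> {..<n}"
  by (auto simp: mirror_def)

lemma mirror_lessThan [simp]: "mirror n {..<n} = {..<n}"
  by (auto simp: mirror_def)

lemma mirror_mirror: "S \<subseteq> {..<n} \<Longrightarrow> mirror n (mirror n S) = S"
  by (auto simp: mirror_def subset_eq)

lemma mirror_eq_image: "S \<subseteq> {..<n} \<Longrightarrow> mirror n S = (\<lambda>i. n - 1 - i) ` S"
  unfolding mirror_def by (auto intro: rev_image_eqI[of "n - 1 - _"])

lemma card_mirror:
  assumes "S \<subseteq> {..<n}"
  shows "card (mirror n S) = card S"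
proof -
  have "inj_on (\<lambda>i. n - 1 - i) {..<n}"
    by (auto simp: inj_on_def)
  then have "inj_on (\<lambda>i. n - 1 - i) S"
    using assms by (rule inj_on_subset)
  then show ?thesis
    by (simp add: mirror_eq_image[OF assms] card_image)
qed

lemma essential_vars_hat_r: "essential_vars n (hat_r n f) = mirror n (essential_vars n f)"
proof -
  have "(\<exists>w. length w = n \<and> hat_r n f (flip w j) \<noteq> hat_r n f w) \<longleftrightarrow>
      (\<exists>w. length w = n \<and> f (flip w (n - 1 - j)) \<noteq> f w)" if j: "j < n" for j
  proof
    assume "\<exists>w. length w = n \<and> hat_r n f (flip w j) \<noteq> hat_r n f w"
    then show "\<exists>w. length w = n \<and> f (flip w (n - 1 - j)) \<noteq> f w"
      using j by (auto simp: hat_r_def rw_def rev_flip intro: exI[of _ "rev _"])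
  next
    assume "\<exists>w. length w = n \<and> f (flip w (n - 1 - j)) \<noteq> f w"
    then obtain w where "length w = n" "f (flip w (n - 1 - j)) \<noteq> f w"
      by blast
    then show "\<exists>w. length w = n \<and> hat_r n f (flip w j) \<noteq> hat_r n f w"
      using j by (intro exI[of _ "rev w"]) (simp add: hat_r_def rw_def rev_flip)
  qed
  then show ?thesis
    by (auto simp: essential_vars_def mirror_def)
qed

lemma act_in_L2bar: "g \<in> L2bar m \<Longrightarrow> act m a g \<in> L2bar m"
  by (cases a) (simp_all add: L2bar_def irreducible_rule_iff_essential_vars hat_c_in_L2 hat_r_in_L2
      essential_vars_hat_c essential_vars_hat_r)

lemma nth_sorted_list_of_set_in:
  "finite S \<Longrightarrow> i < card S \<Longrightarrow> sorted_list_of_set S ! i \<in> S"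
  by (metis length_sorted_list_of_set nth_mem set_sorted_list_of_set)

lemma image_nth_sorted_list_of_set:
  "finite S \<Longrightarrow> (!) (sorted_list_of_set S) ` {..<card S} = S"
  by (metis atLeast_upt image_set length_sorted_list_of_set map_nth set_sorted_list_of_set)

lemma inj_on_nth_sorted_list_of_set: "inj_on ((!) (sorted_list_of_set S)) {..<card S}"
  by (simp add: inj_on_nth)

definition subword :: "nat set \<Rightarrow> bool list \<Rightarrow> bool list" where
  "subword S w = map ((!) w) (sorted_list_of_set S)"

definition position_in :: "nat set \<Rightarrow> nat \<Rightarrow> nat" where
  "position_in S k = the_inv_into {..<card S} ((!) (sorted_list_of_set S)) k"

definition spread :: "nat set \<Rightarrow> nat \<Rightarrow> bool list \<Rightarrow> bool list" where
  "spread S n v = map (\<lambda>k. k \<in> S \<and> v ! position_in S k) [0..<n]"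

lemma length_subword [simp]: "finite S \<Longrightarrow> length (subword S w) = card S"
  by (simp add: subword_def)

lemma nth_subword: "finite S \<Longrightarrow> i < card S \<Longrightarrow> subword S w ! i = w ! (sorted_list_of_set S ! i)"
  by (simp add: subword_def)

lemma subword_flip_notin:
  assumes fin: "finite S" and j: "j \<notin> S"
  shows "subword S (flip w j) = subword S w"
proof -
  have "j \<noteq> sorted_list_of_set S ! i" if "i < card S" for i
    using nth_sorted_list_of_set_in[OF fin that] j by auto
  then show ?thesis
    by (intro nth_equalityI) (simp_all add: fin nth_subword flip_def nth_list_update)
qed

lemma subword_flip_nth:
  assumes S: "S \<subseteq> {..<length w}" and i: "i < card S"
  shows "subword S (flip w (sorted_list_of_set S ! i)) = flip (subword S w) i"
proof -
  have fin: "finite S"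
    using S finite_subset by blast
  have "sorted_list_of_set S ! k < length w" if "k < card S" for k
    using S nth_sorted_list_of_set_in[OF fin that] by auto
  then show ?thesis
    using fin i inj_on_nth_sorted_list_of_set[of S]
    by (intro nth_equalityI) (auto simp: nth_subword flip_def nth_list_update inj_on_eq_iff)
qed

lemma length_spread [simp]: "length (spread S n v) = n"
  by (simp add: spread_def)

lemma position_in_nth_sorted_list_of_set:
  "i < card S \<Longrightarrow> position_in S (sorted_list_of_set S ! i) = i"
  unfolding position_in_def by (simp add: the_inv_into_f_f inj_on_nth_sorted_list_of_set)

lemma subword_spread:
  assumes S: "S \<subseteq> {..<n}" and v: "length v = card S"
  shows "subword S (spread S n v) = v"
proof -
  have fin: "finite S"
    using S finite_subset by blast
  have "sorted_list_of_set S ! i < n" if "i < card S" for i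
    using S nth_sorted_list_of_set_in[OF fin that] by auto
  then show ?thesis
    using fin v nth_sorted_list_of_set_in[OF fin]
    by (intro nth_equalityI) (simp_all add: nth_subword spread_def position_in_nth_sorted_list_of_set)
qed

lemma nth_spread_subword:
  assumes S: "S \<subseteq> {..<n}" and k: "k \<in> S"
  shows "spread S n (subword S w) ! k = w ! k"
proof -
  have fin: "finite S"
    using S finite_subset by blast
  obtain i where "i < card S" "k = sorted_list_of_set S ! i"
    using image_nth_sorted_list_of_set[OF fin] k by blast
  moreover have "k < n"
    using S k by auto
  ultimately show ?thesis
    using k by (simp add: spread_def nth_subword fin position_in_nth_sorted_list_of_set)
qed

lemma subword_map_Not:
  assumes S: "S \<subseteq> {..<length w}"
  shows "subword S (map Not w) = map Not (subword S w)"
proof -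
  have "finite S"
    using S finite_subset by blast
  then show ?thesis
    using S by (auto simp: subword_def subset_eq)
qed

lemma sorted_list_of_set_mirror:
  assumes S: "S \<subseteq> {..<n}"
  shows "sorted_list_of_set (mirror n S) = rev (map (\<lambda>i. n - 1 - i) (sorted_list_of_set S))"
proof -
  have fin: "finite S"
    using S finite_subset by blast
  have "sorted_wrt (\<lambda>x y. n - 1 - y < n - 1 - x) (sorted_list_of_set S)"
    using S fin by (intro sorted_wrt_mono_rel[OF _ strict_sorted_list_of_set]) auto
  then have "sorted_wrt (<) (rev (map (\<lambda>i. n - 1 - i) (sorted_list_of_set S)))"
    by (simp add: sorted_wrt_rev sorted_wrt_map)
  moreover have "set (rev (map (\<lambda>i. n - 1 - i) (sorted_list_of_set S))) = mirror n S"
    using fin by (simp add: mirror_eq_image[OF S])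
  moreover have "length (rev (map (\<lambda>i. n - 1 - i) (sorted_list_of_set S))) = card (mirror n S)"
    by (simp add: card_mirror[OF S])
  moreover have "finite (mirror n S)"
    using mirror_subset finite_subset by blast
  ultimately show ?thesis
    using sorted_list_of_set_unique by blast
qed

lemma subword_rev:
  assumes S: "S \<subseteq> {..<n}" and w: "length w = n"
  shows "subword S (rev w) = rev (subword (mirror n S) w)"
proof -
  have "finite S"
    using S finite_subset by blast
  then show ?thesis
    using S w by (auto simp: subword_def sorted_list_of_set_mirror[OF S] rev_map rev_nth subset_eq
        intro!: map_cong)
qed

definition lift_rule :: "nat \<Rightarrow> nat set \<Rightarrow> (bool list \<Rightarrow> bool) \<Rightarrow> bool list \<Rightarrow> bool" where
  "lift_rule n S g = (\<lambda>w. if length w = n then g (subword S w) else False)"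

lemma lift_rule_in_L2: "lift_rule n S g \<in> L2 n"
  by (simp add: lift_rule_def L2_def)

lemma hat_c_lift_rule:
  assumes "S \<subseteq> {..<n}"
  shows "hat_c n (lift_rule n S g) = lift_rule n S (hat_c (card S) g)"
  using assms finite_subset[OF assms]
  by (auto simp: fun_eq_iff hat_c_def lift_rule_def cw_def subword_map_Not)

lemma hat_r_lift_rule:
  assumes S: "S \<subseteq> {..<n}"
  shows "hat_r n (lift_rule n S g) = lift_rule n (mirror n S) (hat_r (card S) g)"
  using S finite_subset[OF mirror_subset finite_lessThan]
  by (auto simp: fun_eq_iff hat_r_def lift_rule_def rw_def subword_rev card_mirror)

lemma inj_on_lift_rule:
  assumes S: "S \<subseteq> {..<n}"
  shows "inj_on (lift_rule n S) (L2 (card S))"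
proof (rule inj_onI)
  fix g g' assume g: "g \<in> L2 (card S)" and g': "g' \<in> L2 (card S)"
    and eq: "lift_rule n S g = lift_rule n S g'"
  have "g v = g' v" if v: "length v = card S" for v
    using fun_cong[OF eq, of "spread S n v"] by (simp add: lift_rule_def subword_spread[OF S v])
  then show "g = g'"
    using g g' by (auto simp: fun_eq_iff L2_def)
qed

lemma essential_vars_lift_rule_subset:
  assumes "finite S"
  shows "essential_vars n (lift_rule n S g) \<subseteq> S"
proof
  fix j assume "j \<in> essential_vars n (lift_rule n S g)"
  then obtain w where "g (subword S (flip w j)) \<noteq> g (subword S w)"
    by (fastforce simp: essential_vars_def lift_rule_def)
  then show "j \<in> S"
    using subword_flip_notin[OF assms, of j w] by metis
qed

lemma nth_mem_essential_vars_lift_rule_iff: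
  assumes S: "S \<subseteq> {..<n}" and i: "i < card S"
  shows "sorted_list_of_set S ! i \<in> essential_vars n (lift_rule n S g) \<longleftrightarrow> i \<in> essential_vars (card S) g"
proof
  have fin: "finite S"
    using S finite_subset by blast
  show "i \<in> essential_vars (card S) g" if mem: "sorted_list_of_set S ! i \<in> essential_vars n (lift_rule n S g)"
  proof -
    obtain w where "length w = n" "g (subword S (flip w (sorted_list_of_set S ! i))) \<noteq> g (subword S w)"
      using mem by (fastforce simp: essential_vars_def lift_rule_def)
    then have "g (flip (subword S w) i) \<noteq> g (subword S w)"
      using S i by (simp add: subword_flip_nth)
    then show ?thesis
      using i fin by (auto simp: essential_vars_def intro!: exI[of _ "subword S w"])
  qed
  show "sorted_list_of_set S ! i \<in> essential_vars n (lift_rule n S g)" if mem: "i \<in> essential_vars (card S) g"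
  proof -
    obtain v where v: "length v = card S" "g (flip v i) \<noteq> g v"
      using mem by (auto simp: essential_vars_def)
    have "sorted_list_of_set S ! i < n"
      using S nth_sorted_list_of_set_in[OF fin i] by auto
    moreover have "subword S (flip (spread S n v) (sorted_list_of_set S ! i)) = flip v i"
      using S i by (simp add: subword_flip_nth subword_spread[OF S v(1)])
    ultimately show ?thesis
      using v by (auto simp: essential_vars_def lift_rule_def subword_spread[OF S v(1)]
          intro!: exI[of _ "spread S n v"])
  qed
qed

lemma essential_vars_lift_rule:
  assumes S: "S \<subseteq> {..<n}"
  shows "essential_vars n (lift_rule n S g) = (!) (sorted_list_of_set S) ` essential_vars (card S) g"
proof -
  have fin: "finite S"
    using S finite_subset by blast
  show ?thesis
  proof (rule set_eqI)
    fix j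
    show "j \<in> essential_vars n (lift_rule n S g) \<longleftrightarrow> j \<in> (!) (sorted_list_of_set S) ` essential_vars (card S) g"
    proof (cases "j \<in> S")
      case True
      then obtain i where "i < card S" "j = sorted_list_of_set S ! i"
        using image_nth_sorted_list_of_set[OF fin] by blast
      then show ?thesis
        using nth_mem_essential_vars_lift_rule_iff[OF S] essential_vars_subset[of "card S" g]
        by (auto simp: inj_on_image_mem_iff[OF inj_on_nth_sorted_list_of_set])
    next
      case False
      then show ?thesis
        using essential_vars_lift_rule_subset[OF fin] essential_vars_subset[of "card S" g]
          nth_sorted_list_of_set_in[OF fin] by blast
    qed
  qed
qed

lemma essential_vars_lift_rule_irreducible:
  assumes "S \<subseteq> {..<n}" and "g \<in> L2bar (card S)"
  shows "essential_vars n (lift_rule n S g) = S"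
  using assms finite_subset[OF assms(1)]
  by (simp add: essential_vars_lift_rule L2bar_def irreducible_rule_iff_essential_vars
      image_nth_sorted_list_of_set)

lemma ex_lift_rule_essential_vars:
  assumes f: "f \<in> L2 n"
  shows "\<exists>g \<in> L2bar (card (essential_vars n f)). f = lift_rule n (essential_vars n f) g"
proof -
  define S where "S = essential_vars n f"
  have S: "S \<subseteq> {..<n}"
    by (simp add: S_def essential_vars_subset)
  define g where "g v = (length v = card S \<and> f (spread S n v))" for v
  have f_eq: "f = lift_rule n S g"
  proof
    fix w
    have "f (spread S n (subword S w)) = f w" if "length w = n"
      using that S f by (intro rule_eq_if_agree_on_essential_vars) (auto simp: S_def nth_spread_subword)
    then show "f w = lift_rule n S g w"
      using f finite_subset[OF S] by (auto simp: lift_rule_def g_def L2_def)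
  qed
  have "essential_vars n (lift_rule n S g) = S"
    unfolding f_eq[symmetric] by (simp add: S_def)
  then have "(!) (sorted_list_of_set S) ` essential_vars (card S) g = (!) (sorted_list_of_set S) ` {..<card S}"
    using essential_vars_lift_rule[OF S, of g]
    by (simp add: image_nth_sorted_list_of_set[OF finite_subset[OF S finite_lessThan]])
  then have "essential_vars (card S) g = {..<card S}"
    by (simp add: inj_on_image_eq_iff[OF inj_on_nth_sorted_list_of_set essential_vars_subset])
  then have "g \<in> L2bar (card S)"
    by (simp add: L2bar_def L2_def g_def irreducible_rule_iff_essential_vars)
  with f_eq show ?thesis
    unfolding S_def by blast
qed

lemma bij_betw_lift_rule:
  "bij_betw (\<lambda>(S, g). lift_rule n S g) (SIGMA S:Pow {..<n}. L2bar (card S)) (L2 n)"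
proof (rule bij_betwI')
  fix x y assume "x \<in> (SIGMA S:Pow {..<n}. L2bar (card S))" "y \<in> (SIGMA S:Pow {..<n}. L2bar (card S))"
  then obtain S g T h where x: "x = (S, g)" "S \<subseteq> {..<n}" "g \<in> L2bar (card S)"
    and y: "y = (T, h)" "T \<subseteq> {..<n}" "h \<in> L2bar (card T)"
    by blast
  show "(case x of (S, g) \<Rightarrow> lift_rule n S g) = (case y of (S, g) \<Rightarrow> lift_rule n S g) \<longleftrightarrow> x = y"
  proof
    assume eq: "(case x of (S, g) \<Rightarrow> lift_rule n S g) = (case y of (S, g) \<Rightarrow> lift_rule n S g)"
    then have "S = T"
      using x y by (metis essential_vars_lift_rule_irreducible case_prod_conv)
    then show "x = y"
      using eq x y inj_on_lift_rule[OF x(2)] by (auto simp: L2bar_def inj_on_def)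
  qed simp
next
  fix f assume "f \<in> L2 n"
  then obtain g where "g \<in> L2bar (card (essential_vars n f))" "f = lift_rule n (essential_vars n f) g"
    using ex_lift_rule_essential_vars by blast
  then show "\<exists>x \<in> (SIGMA S:Pow {..<n}. L2bar (card S)). f = (case x of (S, g) \<Rightarrow> lift_rule n S g)"
    using essential_vars_subset by (intro bexI[of _ "(essential_vars n f, g)"]) auto
qed (simp add: lift_rule_in_L2 split: prod.splits)

fun act_positions :: "nat \<Rightarrow> S2 \<Rightarrow> nat set \<Rightarrow> nat set" where
  "act_positions n S2_1 S = S"
| "act_positions n S2_c S = S"
| "act_positions n S2_r S = mirror n S"
| "act_positions n S2_rc S = mirror n S"

lemma act_positions_subset: "S \<subseteq> {..<n} \<Longrightarrow> act_positions n a S \<subseteq> {..<n}"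
  by (cases a) (simp_all add: mirror_subset)

lemma card_act_positions: "S \<subseteq> {..<n} \<Longrightarrow> card (act_positions n a S) = card S"
  by (cases a) (simp_all add: card_mirror)

lemma stab_positions: "{a. act_positions n a S = S} = (if mirror n S = S then U_S2 else U_c)"
proof (rule set_eqI)
  fix a
  show "a \<in> {a. act_positions n a S = S} \<longleftrightarrow> a \<in> (if mirror n S = S then U_S2 else U_c)"
    by (cases a) (simp_all add: U_defs)
qed

lemma act_lift_rule:
  "S \<subseteq> {..<n} \<Longrightarrow> act n a (lift_rule n S g) = lift_rule n (act_positions n a S) (act (card S) a g)"
  by (cases a) (simp_all add: hat_c_lift_rule hat_r_lift_rule mirror_subset card_mirror)

lemma stab_lift_rule:
  assumes S: "S \<subseteq> {..<n}" and g: "g \<in> L2bar (card S)"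
  shows "stab n (lift_rule n S g) = stab (card S) g \<inter> {a. act_positions n a S = S}"
proof -
  have "act n a (lift_rule n S g) = lift_rule n S g \<longleftrightarrow> act (card S) a g = g \<and> act_positions n a S = S" for a
  proof
    assume eq: "act n a (lift_rule n S g) = lift_rule n S g"
    have "act (card S) a g \<in> L2bar (card (act_positions n a S))"
      using act_in_L2bar[OF g] card_act_positions[OF S] by simp
    then have "act_positions n a S = S"
      using eq essential_vars_lift_rule_irreducible[OF act_positions_subset[OF S]]
        essential_vars_lift_rule_irreducible[OF S g] by (metis act_lift_rule[OF S])
    moreover have "act (card S) a g = g"
      using eq calculation inj_on_lift_rule[OF S] act_in_L2bar[OF g] g
      by (auto simp: act_lift_rule[OF S] L2bar_def inj_on_def)
    ultimately show "act (card S) a g = g \<and> act_positions n a S = S"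
      by simp
  qed (simp add: act_lift_rule[OF S])
  then show ?thesis
    by (auto simp: stab_def)
qed

lemma card_rules_with_stab:
  "card {f \<in> L2 n. stab n f = U} =
    (\<Sum>S\<in>Pow {..<n}. card {g \<in> L2bar (card S).
       stab (card S) g \<inter> (if mirror n S = S then U_S2 else U_c) = U})"
proof -
  have "card {f \<in> L2 n. stab n f = U} =
      card {x \<in> (SIGMA S:Pow {..<n}. L2bar (card S)). stab n (case x of (S, g) \<Rightarrow> lift_rule n S g) = U}"
    by (rule card_Collect_bij_betw[OF bij_betw_lift_rule])
  also have "{x \<in> (SIGMA S:Pow {..<n}. L2bar (card S)). stab n (case x of (S, g) \<Rightarrow> lift_rule n S g) = U} =
      (SIGMA S:Pow {..<n}. {g \<in> L2bar (card S).
        stab (card S) g \<inter> (if mirror n S = S then U_S2 else U_c) = U})"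
    by (auto simp: stab_lift_rule stab_positions)
  finally show ?thesis
    by (simp add: finite_L2bar)
qed

definition middle :: "nat \<Rightarrow> nat set" where
  "middle n = (if odd n then {n div 2} else {})"

definition symmetric_subsets :: "nat \<Rightarrow> nat \<Rightarrow> nat set set" where
  "symmetric_subsets n m = {S. S \<subseteq> {..<n} \<and> card S = m \<and> mirror n S = S}"

lemma mirror_lower_half:
  assumes "L \<subseteq> {..<n div 2}"
  shows "mirror n L \<inter> {..<n div 2} = {}" and "mirror n L \<inter> middle n = {}"
  using assms by (auto simp: mirror_def middle_def subset_eq elim!: oddE)

lemma middle_subset: "middle n \<subseteq> {..<n}"
  by (auto simp: middle_def elim: oddE)

lemma mirror_middle: "mirror n (middle n) = middle n"
  by (auto simp: mirror_def middle_def elim: oddE)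

lemma card_middle_le: "card (M \<inter> middle n) \<le> 1"
  by (rule order_trans[OF card_mono[of "middle n"]]) (auto simp: middle_def)

lemma card_symmetric_union:
  assumes L: "L \<subseteq> {..<n div 2}" and M: "M \<subseteq> middle n"
  shows "card (L \<union> mirror n L \<union> M) = 2 * card L + card M"
proof -
  have fin: "finite L" "finite (mirror n L)" "finite M"
    using L M finite_subset[OF mirror_subset] by (auto intro: finite_subset simp: middle_def)
  have "L \<inter> mirror n L = {}" "(L \<union> mirror n L) \<inter> M = {}"
    using L M mirror_lower_half[OF L] by (auto simp: middle_def subset_eq split: if_splits)
  then have "card (L \<union> mirror n L \<union> M) = card L + card (mirror n L) + card M"
    using fin by (simp add: card_Un_disjoint)
  moreover have "card (mirror n L) = card L"
    using L by (intro card_mirror) auto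
  ultimately show ?thesis
    by simp
qed

lemma symmetric_decomposition:
  assumes S: "S \<subseteq> {..<n}" "mirror n S = S"
  shows "S = (S \<inter> {..<n div 2}) \<union> mirror n (S \<inter> {..<n div 2}) \<union> (S \<inter> middle n)"
proof (intro equalityI subsetI)
  fix i assume i: "i \<in> S"
  then have "i < n" "n - 1 - i \<in> S"
    using S by (auto simp: mirror_def)
  then show "i \<in> (S \<inter> {..<n div 2}) \<union> mirror n (S \<inter> {..<n div 2}) \<union> (S \<inter> middle n)"
    using i by (auto simp: mirror_def middle_def elim!: oddE evenE)
next
  fix i assume "i \<in> (S \<inter> {..<n div 2}) \<union> mirror n (S \<inter> {..<n div 2}) \<union> (S \<inter> middle n)"
  then show "i \<in> S"
    using S by (auto simp: mirror_def)
qed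

lemma card_symmetric:
  assumes "S \<subseteq> {..<n}" "mirror n S = S"
  shows "card S = 2 * card (S \<inter> {..<n div 2}) + card (S \<inter> middle n)"
  using card_symmetric_union[of "S \<inter> {..<n div 2}" n "S \<inter> middle n"]
  by (simp flip: symmetric_decomposition[OF assms])

lemma symmetric_subset_inter_middle:
  assumes "S \<in> symmetric_subsets n m"
  shows "S \<inter> middle n = (if odd m then middle n else {})"
proof -
  have "card (S \<inter> middle n) = m mod 2"
    using assms card_symmetric card_middle_le[of S n] by (auto simp: symmetric_subsets_def)
  then show ?thesis
    by (cases "n div 2 \<in> S") (auto simp: middle_def odd_iff_mod_2_eq_one even_iff_mod_2_eq_zero)
qed

lemma bij_betw_symmetric_subsets_lower_half:
  assumes "odd n \<or> even m"
  shows "bij_betw (\<lambda>S. S \<inter> {..<n div 2}) (symmetric_subsets n m) {L. L \<subseteq> {..<n div 2} \<and> card L = m div 2}"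
proof -
  define M where "M = (if odd m then middle n else {})"
  have card_M: "card M = m mod 2"
    using assms by (auto simp: M_def middle_def odd_iff_mod_2_eq_one even_iff_mod_2_eq_zero)
  have M: "M \<subseteq> middle n" "M \<subseteq> {..<n}" "mirror n M = M"
    using middle_subset by (auto simp: M_def mirror_middle mirror_def[of n "{}"])
  have M_lower_half: "M \<inter> {..<n div 2} = {}"
    by (simp add: M_def middle_def)
  show ?thesis
  proof (rule bij_betw_byWitness[where f' = "\<lambda>L. L \<union> mirror n L \<union> M"])
    show "\<forall>S\<in>symmetric_subsets n m. S \<inter> {..<n div 2} \<union> mirror n (S \<inter> {..<n div 2}) \<union> M = S"
    proof
      fix S assume S: "S \<in> symmetric_subsets n m"
      then have "S = S \<inter> {..<n div 2} \<union> mirror n (S \<inter> {..<n div 2}) \<union> (S \<inter> middle n)"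
        by (intro symmetric_decomposition) (auto simp: symmetric_subsets_def)
      moreover have "S \<inter> middle n = M"
        using symmetric_subset_inter_middle[OF S] by (simp add: M_def)
      ultimately show "S \<inter> {..<n div 2} \<union> mirror n (S \<inter> {..<n div 2}) \<union> M = S"
        by metis
    qed
    show "\<forall>L\<in>{L. L \<subseteq> {..<n div 2} \<and> card L = m div 2}. (L \<union> mirror n L \<union> M) \<inter> {..<n div 2} = L"
      using mirror_lower_half(1) M_lower_half by auto
    show "(\<lambda>S. S \<inter> {..<n div 2}) ` symmetric_subsets n m \<subseteq> {L. L \<subseteq> {..<n div 2} \<and> card L = m div 2}"
    proof (rule image_subsetI)
      fix S assume S: "S \<in> symmetric_subsets n m"
      then have "m = 2 * card (S \<inter> {..<n div 2}) + m mod 2"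
        using card_symmetric symmetric_subset_inter_middle[OF S] card_M
        by (auto simp: symmetric_subsets_def M_def)
      then show "S \<inter> {..<n div 2} \<in> {L. L \<subseteq> {..<n div 2} \<and> card L = m div 2}"
        by simp
    qed
    show "(\<lambda>L. L \<union> mirror n L \<union> M) ` {L. L \<subseteq> {..<n div 2} \<and> card L = m div 2} \<subseteq> symmetric_subsets n m"
      using card_symmetric_union[OF _ M(1)] M card_M mirror_subset
      by (auto simp: symmetric_subsets_def mirror_mirror mirror_def)
  qed
qed

lemma card_symmetric_subsets: "card (symmetric_subsets n m) = alpha n m"
proof (cases "even n \<and> odd m")
  case True
  then have "symmetric_subsets n m = {}"
    using card_symmetric by (auto simp: symmetric_subsets_def middle_def)
  then show ?thesis
    using True by (simp add: alpha_def)
next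
  case False
  then have "bij_betw (\<lambda>S. S \<inter> {..<n div 2}) (symmetric_subsets n m)
      {L. L \<subseteq> {..<n div 2} \<and> card L = m div 2}"
    by (intro bij_betw_symmetric_subsets_lower_half) simp
  then have "card (symmetric_subsets n m) = card {L. L \<subseteq> {..<n div 2} \<and> card L = m div 2}"
    by (rule bij_betw_same_card)
  moreover have "alpha n m = n div 2 choose (m div 2)"
    using False unfolding alpha_def by (rule if_not_P)
  ultimately show ?thesis
    by (simp add: n_subsets)
qed

lemma sum_Pow_by_card_and_symmetry:
  fixes h :: "nat \<Rightarrow> bool \<Rightarrow> real"
  shows "(\<Sum>S\<in>Pow {..<n}. h (card S) (mirror n S = S)) =
    (\<Sum>m\<le>n. real (alpha n m) * h m True + real_of_int (beta n m) * h m False)"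
proof -
  have "(\<Sum>S\<in>Pow {..<n}. h (card S) (mirror n S = S)) =
      (\<Sum>m\<le>n. \<Sum>S\<in>{S \<in> Pow {..<n}. card S = m}. h (card S) (mirror n S = S))"
    by (rule sum.group[symmetric]) (auto dest: card_mono[OF finite_lessThan])
  also have "\<dots> = (\<Sum>m\<le>n. real (alpha n m) * h m True + real_of_int (beta n m) * h m False)"
  proof (rule sum.cong[OF refl])
    fix m
    define A where "A = {S \<in> Pow {..<n}. card S = m}"
    have subset_A: "symmetric_subsets n m \<subseteq> A" and finite_A: "finite A"
      by (auto simp: A_def symmetric_subsets_def)
    have "card A = n choose m"
      using n_subsets[of "{..<n}" m] by (simp add: A_def Pow_def)
    moreover have "card (symmetric_subsets n m) \<le> card A"
      using finite_A subset_A by (rule card_mono)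
    ultimately have card_diff: "real (card (A - symmetric_subsets n m)) = real_of_int (beta n m)"
      using finite_A subset_A
      by (simp add: card_Diff_subset of_nat_diff card_symmetric_subsets beta_def finite_subset)
    have "(\<Sum>S\<in>A. h (card S) (mirror n S = S)) = (\<Sum>S\<in>A - symmetric_subsets n m.
        h (card S) (mirror n S = S)) + (\<Sum>S\<in>symmetric_subsets n m. h (card S) (mirror n S = S))"
      by (rule sum.subset_diff[OF subset_A finite_A])
    also have "\<dots> = (\<Sum>S\<in>A - symmetric_subsets n m. h m False) + (\<Sum>S\<in>symmetric_subsets n m. h m True)"
      by (intro arg_cong2[where f = "(+)"] sum.cong) (auto simp: A_def symmetric_subsets_def)
    finally have "(\<Sum>S\<in>A. h (card S) (mirror n S = S)) =
        real (alpha n m) * h m True + real_of_int (beta n m) * h m False"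
      by (simp add: card_diff card_symmetric_subsets)
    then show "(\<Sum>S\<in>{S \<in> Pow {..<n}. card S = m}. h (card S) (mirror n S = S)) =
        real (alpha n m) * h m True + real_of_int (beta n m) * h m False"
      unfolding A_def .
  qed
  finally show ?thesis .
qed

lemma card_rules_with_stab_alpha_beta:
  "real (card {f \<in> L2 n. stab n f = U}) =
    (\<Sum>m\<le>n. real (alpha n m) * real (card {g \<in> L2bar m. stab m g = U})
      + real_of_int (beta n m) * real (card {g \<in> L2bar m. stab m g \<inter> U_c = U}))"
  using sum_Pow_by_card_and_symmetry[of
      "\<lambda>m b. real (card {g \<in> L2bar m. stab m g \<inter> (if b then U_S2 else U_c) = U})" n]
  by (simp add: card_rules_with_stab U_S2_def)

lemma stab_inter_U_c:
  assumes "g \<in> L2bar m"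
  shows "stab m g \<inter> U_c = U_c \<longleftrightarrow> stab m g = U_c \<or> stab m g = U_S2"
    and "stab m g \<inter> U_c = U_1 \<longleftrightarrow> stab m g = U_1 \<or> stab m g = U_r \<or> stab m g = U_rc"
  using stab_cases[OF subsetD[OF L2bar_subset_L2 assms]]
  by (elim disjE; simp add: U_inter_U_c U_distinct U_distinct[symmetric])+

lemma card_stab_inter_U_c_eq_U_c:
  "card {g \<in> L2bar m. stab m g \<inter> U_c = U_c} =
    card {g \<in> L2bar m. stab m g = U_c} + card {g \<in> L2bar m. stab m g = U_S2}"
proof -
  have "{g \<in> L2bar m. stab m g \<inter> U_c = U_c} =
      {g \<in> L2bar m. stab m g = U_c} \<union> {g \<in> L2bar m. stab m g = U_S2}"
    using stab_inter_U_c(1) by blast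
  then show ?thesis
    using U_distinct by (simp add: card_Un_disjoint finite_L2bar disjoint_iff)
qed

lemma card_stab_inter_U_c_eq_U_1:
  "card {g \<in> L2bar m. stab m g \<inter> U_c = U_1} = card {g \<in> L2bar m. stab m g = U_1}
    + card {g \<in> L2bar m. stab m g = U_r} + card {g \<in> L2bar m. stab m g = U_rc}"
proof -
  have "{g \<in> L2bar m. stab m g \<inter> U_c = U_1} = {g \<in> L2bar m. stab m g = U_1}
      \<union> {g \<in> L2bar m. stab m g = U_r} \<union> {g \<in> L2bar m. stab m g = U_rc}"
    using stab_inter_U_c(2) by blast
  then show ?thesis
    using U_distinct by (simp add: card_Un_disjoint finite_L2bar disjoint_iff)
qed

lemma stab_inter_U_c_other_empty:
  assumes "U \<noteq> U_1" "U \<noteq> U_c"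
  shows "{g \<in> L2bar m. stab m g \<inter> U_c = U} = {}"
proof -
  have "stab m g \<inter> U_c = U_c \<or> stab m g \<inter> U_c = U_1" if "g \<in> L2bar m" for g
    using stab_inter_U_c[OF that] stab_cases[OF subsetD[OF L2bar_subset_L2 that]] by blast
  then show ?thesis
    using assms by fastforce
qed

lemma card_t_cls:
  "real (card (t_cls n U)) = real (card {f \<in> L2 n. stab n f = U}) * real (card U) / 4"
proof -
  have "card (t_cls n U) * 4 = card {f \<in> L2 n. stab n f = U} * card U"
    unfolding t_cls_def by (rule card_orbits_with_stab) (simp_all add: finite_L2 act_in_L2)
  then show ?thesis
    using arg_cong[of _ _ real] by fastforce
qed

lemma card_irreducible_with_stab:
  assumes "card U \<noteq> 0"
  shows "real (card {g \<in> L2bar m. stab m g = U}) = 4 * real (card (tbar_cls m U)) / real (card U)"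
proof -
  have "card (tbar_cls m U) * 4 = card {g \<in> L2bar m. stab m g = U} * card U"
    unfolding tbar_cls_def
    by (rule card_orbits_with_stab) (simp_all add: finite_L2bar act_in_L2bar L2bar_subset_L2)
  then show ?thesis
    using assms arg_cong[of _ _ real] by (fastforce simp: field_simps)
qed

lemma alpha_plus_beta: "real (alpha n m) + real_of_int (beta n m) = real (n choose m)"
  by (simp add: beta_def)

lemma card_t_cls_alpha:
  assumes "U \<noteq> U_1" "U \<noteq> U_c" "card U \<noteq> 0"
  shows "real (card (t_cls n U)) = (\<Sum>m\<le>n. real (alpha n m) * real (card (tbar_cls m U)))"
  using assms
  by (simp add: card_t_cls card_rules_with_stab_alpha_beta stab_inter_U_c_other_empty
      card_irreducible_with_stab sum_distrib_right sum_divide_distrib)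

lemma card_t_cls_U_c:
  "real (card (t_cls n U_c)) = (\<Sum>m\<le>n. real (n choose m) * real (card (tbar_cls m U_c))
    + (1/2) * real_of_int (beta n m) * real (card (tbar_cls m U_S2)))"
  unfolding card_t_cls card_rules_with_stab_alpha_beta card_stab_inter_U_c_eq_U_c sum_distrib_right
    sum_divide_distrib alpha_plus_beta[symmetric]
  by (intro sum.cong refl) (simp add: card_irreducible_with_stab card_U field_simps)

lemma card_t_cls_U_1:
  "real (card (t_cls n U_1)) = (\<Sum>m\<le>n. real (n choose m) * real (card (tbar_cls m U_1))
    + (1/2) * real_of_int (beta n m) * (real (card (tbar_cls m U_r)) + real (card (tbar_cls m U_rc))))"
  unfolding card_t_cls card_rules_with_stab_alpha_beta card_stab_inter_U_c_eq_U_1 sum_distrib_right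
    sum_divide_distrib alpha_plus_beta[symmetric]
  by (intro sum.cong refl) (simp add: card_irreducible_with_stab card_U field_simps)

theorem proposition6:
  fixes n :: nat
  shows
   "(real (card (tbar_cls n U_S2)) = real (card (t_cls n U_S2))
      - (\<Sum>m<n. real (alpha n m) * real (card (tbar_cls m U_S2))))
  \<and> (real (card (tbar_cls n U_r)) = real (card (t_cls n U_r))
      - (\<Sum>m<n. real (alpha n m) * real (card (tbar_cls m U_r))))
  \<and> (real (card (tbar_cls n U_rc)) = real (card (t_cls n U_rc))
      - (\<Sum>m<n. real (alpha n m) * real (card (tbar_cls m U_rc))))
  \<and> (real (card (tbar_cls n U_c)) = real (card (t_cls n U_c))
      - (\<Sum>m<n. real (n choose m) * real (card (tbar_cls m U_c))
                + (1/2) * real_of_int (beta n m) * real (card (tbar_cls m U_S2))))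
  \<and> (real (card (tbar_cls n U_1)) = real (card (t_cls n U_1))
      - (\<Sum>m<n. real (n choose m) * real (card (tbar_cls m U_1))
                + (1/2) * real_of_int (beta n m)
                    * (real (card (tbar_cls m U_r)) + real (card (tbar_cls m U_rc)))))"
proof -
  have split_last: "(\<Sum>m\<le>n. F m) = F n + (\<Sum>m<n. F m)" for F :: "nat \<Rightarrow> real"
    by (simp flip: lessThan_Suc_atMost)
  have "alpha n n = 1" "beta n n = 0"
    by (simp_all add: alpha_def beta_def)
  moreover have "card U_S2 \<noteq> 0" "card U_r \<noteq> 0" "card U_rc \<noteq> 0"
    by (simp_all add: card_U)
  ultimately show ?thesis
    using card_t_cls_alpha[of U_S2 n] card_t_cls_alpha[of U_r n] card_t_cls_alpha[of U_rc n]
      card_t_cls_U_c[of n] card_t_cls_U_1[of n] U_distinct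
    by (simp only: split_last) simp
qed

end
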